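(* Let $(\mathcal M,g)$ be an $n$-dimensional Lorentzian manifold ($n\ge3$) with a concircularly semi-symmetric metric connection $\overset{1}{\nabla}$ whose associated vector field $P$ satisfies $g(P,P)=-1$. Then $(\mathcal M,g,\overset{1}{\nabla})$ is an Einstein type manifold of the fifth kind (i.e. $\overset{5}{Ric}=\frac{\overset{5}{r}}{n}g$) if and only if it is a perfect fluid space-time whose Ricci tensor is $\overset{g}{Ric}=\frac{n-1}{2}(3g+\pi\otimes\pi)$; in that case the scalar curvature is constant, $2\overset{g}{r}=(n-1)(3n-1)$.
   Context: Let $(\mathcal M,g)$ be an $n$-dimensional pseudo-Riemannian manifold with Levi-Civita connection $\overset{g}{\nabla}$, let $P$ be a vector field and $\pi=g(\cdot,P)$ its associated 1-form. The semi-symmetric metric connection generated by $\pi$ is $\overset{1}{\nabla}_XY=\overset{g}{\nabla}_XY+\pi(Y)X-g(X,Y)P$; it satisfies $\overset{1}{\nabla}g=0$ and has torsion $\overset{1}{T}(X,Y)=\pi(Y)X-\pi(X)Y$. It is called a concircularly semi-symmetric metric connection if there is a smooth function $\omega$ on $\mathcal M$ such that $(\overset{g}{\nabla}_X\pi)(Y)-\pi(X)\pi(Y)=\omega\, g(X,Y)$ for all vector fields $X,Y$. Curvature tensors: $\overset{1}{R}(X,Y)Z=\overset{1}{\nabla}_X\overset{1}{\nabla}_YZ-\overset{1}{\nabla}_Y\overset{1}{\nabla}_XZ-\overset{1}{\nabla}_{[X,Y]}Z$ and, with $\mathfrak S_{XYZ}$ the cyclic sum over $X,Y,Z$, $\overset{5}{R}(X,Y)Z=\overset{1}{R}(X,Y)Z-\tfrac12(\overset{1}{\nabla}_X\overset{1}{T})(Y,Z)+\tfrac12(\overset{1}{\nabla}_Y\overset{1}{T})(X,Z)-\tfrac12\mathfrak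 S_{XYZ}\overset{1}{T}(\overset{1}{T}(X,Y),Z)+\tfrac12\overset{1}{T}(\overset{1}{T}(Z,X),Y)$. The Ricci tensors are $\overset{\theta}{Ric}(Y,Z)=\mathrm{tr}(X\mapsto \overset{\theta}{R}(X,Y)Z)$, and $\overset{g}{Ric}$ is the Ricci tensor of $\overset{g}{\nabla}$ defined the same way; $\overset{\theta}{r}$ and $\overset{g}{r}$ are their $g$-traces. A Lorentzian manifold is a perfect fluid space-time if $\overset{g}{Ric}=ag+b\,\pi\otimes\pi$ for scalar functions $a,b$. *)

theory Defs
  imports "HOL-Analysis.Analysis"
begin

text \<open>Local-coordinate model: the manifold is an open coordinate domain U in R^n
  (n = CARD('n)), vector fields are maps U -> R^n (components in the coordinate
  frame), the metric is a matrix-valued function g.\<close>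

type_synonym 'n vf = "real^'n \<Rightarrow> real^'n"
type_synonym 'n metric = "real^'n \<Rightarrow> real^'n^'n"

definition pd :: "'n::finite \<Rightarrow> (real^'n \<Rightarrow> real) \<Rightarrow> real^'n \<Rightarrow> real" where
  "pd i f x = deriv (\<lambda>t. f (x + t *\<^sub>R axis i 1)) 0"

fun Ck :: "nat \<Rightarrow> (real^'n::finite) set \<Rightarrow> (real^'n \<Rightarrow> real) \<Rightarrow> bool" where
  "Ck 0 U f = continuous_on U f"
| "Ck (Suc k) U f = (f differentiable_on U \<and> (\<forall>i. Ck k U (pd i f)))"

definition smooth_fun :: "(real^'n::finite) set \<Rightarrow> (real^'n \<Rightarrow> real) \<Rightarrow> bool" where
  "smooth_fun U f = (\<forall>k. Ck k U f)"

definition smooth_vf :: "(real^'n::finite) set \<Rightarrow> 'n vf \<Rightarrow> bool" where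
  "smooth_vf U X = (\<forall>k. smooth_fun U (\<lambda>x. X x $ k))"

definition smooth_metric :: "(real^'n::finite) set \<Rightarrow> 'n metric \<Rightarrow> bool" where
  "smooth_metric U g = (\<forall>i j. smooth_fun U (\<lambda>x. g x $ i $ j))"

definition lorentzian_matrix :: "real^'n::finite^'n \<Rightarrow> bool" where
  "lorentzian_matrix G = (transpose G = G \<and>
     (\<exists>(A::real^'n^'n) i0. invertible A \<and>
        transpose A ** G ** A = (\<chi> i j. if i = j then (if i = i0 then -1 else 1) else 0)))"

definition coord :: "'n::finite \<Rightarrow> 'n vf" where
  "coord i = (\<lambda>x. axis i 1)"

definition gf :: "'n::finite metric \<Rightarrow> 'n vf \<Rightarrow> 'n vf \<Rightarrow> real^'n \<Rightarrow> real" where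
  "gf g X Y x = X x \<bullet> (g x *v Y x)"

definition ginv :: "'n::finite metric \<Rightarrow> real^'n \<Rightarrow> real^'n^'n" where
  "ginv g x = matrix_inv (g x)"

definition dfun :: "'n::finite vf \<Rightarrow> (real^'n \<Rightarrow> real) \<Rightarrow> real^'n \<Rightarrow> real" where
  "dfun X f x = (\<Sum>i\<in>UNIV. X x $ i * pd i f x)"

definition dvf :: "'n::finite vf \<Rightarrow> 'n vf \<Rightarrow> 'n vf" where
  "dvf X Y x = (\<chi> k. dfun X (\<lambda>y. Y y $ k) x)"

definition lie :: "'n::finite vf \<Rightarrow> 'n vf \<Rightarrow> 'n vf" where
  "lie X Y x = dvf X Y x - dvf Y X x"

definition chr :: "'n::finite metric \<Rightarrow> real^'n \<Rightarrow> 'n \<Rightarrow> 'n \<Rightarrow> 'n \<Rightarrow> real" where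
  "chr g x k i j = (1/2) * (\<Sum>l\<in>UNIV. ginv g x $ k $ l *
      (pd i (\<lambda>y. g y $ j $ l) x + pd j (\<lambda>y. g y $ i $ l) x - pd l (\<lambda>y. g y $ i $ j) x))"

definition nablaG :: "'n::finite metric \<Rightarrow> 'n vf \<Rightarrow> 'n vf \<Rightarrow> 'n vf" where
  "nablaG g X Y x = dvf X Y x + (\<chi> k. \<Sum>i\<in>UNIV. \<Sum>j\<in>UNIV. chr g x k i j * X x $ i * Y x $ j)"

definition curv :: "('n::finite vf \<Rightarrow> 'n vf \<Rightarrow> 'n vf) \<Rightarrow> 'n vf \<Rightarrow> 'n vf \<Rightarrow> 'n vf \<Rightarrow> 'n vf" where
  "curv D X Y Z x = D X (D Y Z) x - D Y (D X Z) x - D (lie X Y) Z x"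

definition ricci :: "('n::finite vf \<Rightarrow> 'n vf \<Rightarrow> 'n vf \<Rightarrow> 'n vf) \<Rightarrow> 'n vf \<Rightarrow> 'n vf \<Rightarrow> real^'n \<Rightarrow> real" where
  "ricci R Y Z x = (\<Sum>i\<in>UNIV. R (coord i) Y Z x $ i)"

definition scal :: "'n::finite metric \<Rightarrow> ('n vf \<Rightarrow> 'n vf \<Rightarrow> real^'n \<Rightarrow> real) \<Rightarrow> real^'n \<Rightarrow> real" where
  "scal g Ric x = (\<Sum>j\<in>UNIV. \<Sum>k\<in>UNIV. ginv g x $ j $ k * Ric (coord j) (coord k) x)"

definition pif :: "'n::finite metric \<Rightarrow> 'n vf \<Rightarrow> 'n vf \<Rightarrow> real^'n \<Rightarrow> real" where
  "pif g P X x = gf g X P x"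

definition nabla1 :: "'n::finite metric \<Rightarrow> 'n vf \<Rightarrow> 'n vf \<Rightarrow> 'n vf \<Rightarrow> 'n vf" where
  "nabla1 g P X Y x = nablaG g X Y x + pif g P Y x *\<^sub>R X x - gf g X Y x *\<^sub>R P x"

definition tors1 :: "'n::finite metric \<Rightarrow> 'n vf \<Rightarrow> 'n vf \<Rightarrow> 'n vf \<Rightarrow> 'n vf" where
  "tors1 g P X Y x = pif g P Y x *\<^sub>R X x - pif g P X x *\<^sub>R Y x"

definition nablaT1 :: "'n::finite metric \<Rightarrow> 'n vf \<Rightarrow> 'n vf \<Rightarrow> 'n vf \<Rightarrow> 'n vf \<Rightarrow> 'n vf" where
  "nablaT1 g P X Y Z x = nabla1 g P X (tors1 g P Y Z) x
     - tors1 g P (nabla1 g P X Y) Z x - tors1 g P Y (nabla1 g P X Z) x"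

definition R1 :: "'n::finite metric \<Rightarrow> 'n vf \<Rightarrow> 'n vf \<Rightarrow> 'n vf \<Rightarrow> 'n vf \<Rightarrow> 'n vf" where
  "R1 g P = curv (nabla1 g P)"

definition R5 :: "'n::finite metric \<Rightarrow> 'n vf \<Rightarrow> 'n vf \<Rightarrow> 'n vf \<Rightarrow> 'n vf \<Rightarrow> 'n vf" where
  "R5 g P X Y Z x = (let T = tors1 g P in
      R1 g P X Y Z x - (1/2) *\<^sub>R nablaT1 g P X Y Z x + (1/2) *\<^sub>R nablaT1 g P Y X Z x
      - (1/2) *\<^sub>R (T (T X Y) Z x + T (T Y Z) X x + T (T Z X) Y x)
      + (1/2) *\<^sub>R T (T Z X) Y x)"

definition RicG :: "'n::finite metric \<Rightarrow> 'n vf \<Rightarrow> 'n vf \<Rightarrow> real^'n \<Rightarrow> real" where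
  "RicG g = ricci (curv (nablaG g))"

definition Ric5 :: "'n::finite metric \<Rightarrow> 'n vf \<Rightarrow> 'n vf \<Rightarrow> 'n vf \<Rightarrow> real^'n \<Rightarrow> real" where
  "Ric5 g P = ricci (R5 g P)"

definition concircular :: "(real^'n::finite) set \<Rightarrow> 'n metric \<Rightarrow> 'n vf \<Rightarrow> bool" where
  "concircular U g P = (\<exists>\<omega>. smooth_fun U \<omega> \<and>
     (\<forall>X Y. smooth_vf U X \<longrightarrow> smooth_vf U Y \<longrightarrow> (\<forall>x\<in>U.
        dfun X (pif g P Y) x - pif g P (nablaG g X Y) x - pif g P X x * pif g P Y x
          = \<omega> x * gf g X Y x)))"

definition einstein5 :: "(real^'n::finite) set \<Rightarrow> 'n metric \<Rightarrow> 'n vf \<Rightarrow> bool" where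
  "einstein5 U g P = (\<forall>Y Z. smooth_vf U Y \<longrightarrow> smooth_vf U Z \<longrightarrow> (\<forall>x\<in>U.
      Ric5 g P Y Z x = scal g (Ric5 g P) x / real CARD('n) * gf g Y Z x))"

definition perfect_fluid :: "(real^'n::finite) set \<Rightarrow> 'n metric \<Rightarrow> 'n vf \<Rightarrow> bool" where
  "perfect_fluid U g P = (\<exists>a b. \<forall>Y Z. smooth_vf U Y \<longrightarrow> smooth_vf U Z \<longrightarrow> (\<forall>x\<in>U.
      RicG g Y Z x = a x * gf g Y Z x + b x * pif g P Y x * pif g P Z x))"

end

theory Submission
  imports Defs
begin

text \<open>Concircularity says \<open>\<nabla>\<^sub>X P = \<pi>(X) P + \<omega> X\<close>;
  differentiating \<open>g(P, P) = -1\<close> then forces \<open>\<omega> = 1\<close>, so \<open>\<nabla>\<^sub>X P = X + \<pi>(X) P\<close> and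
  \<open>R(X, Y) P = \<pi>(Y) X - \<pi>(X) Y\<close>, whence \<open>Ric(Y, P) = (n - 1) \<pi>(Y)\<close>.
  Since \<open>\<nabla>\<pi> = g + \<pi> \<otimes> \<pi>\<close>, the torsion of the semi-symmetric connection is parallel and
  \<open>R\<^sup>1(X, Y) Z = R(X, Y) Z + g(X, Z) Y - g(Y, Z) X\<close>; the torsion terms of \<open>R\<^sup>5\<close> add
  \<open>\<pi>(X) \<pi>(Y) Z / 2 - \<pi>(Y) \<pi>(Z) X / 2\<close>, so
  \<open>Ric\<^sup>5 = Ric - (n - 1) g - (n - 1)/2 \<pi> \<otimes> \<pi>\<close>.
  Evaluating the Einstein condition at \<open>(\<partial>\<^sub>i, P)\<close> with \<open>\<pi>(\<partial>\<^sub>i) \<noteq> 0\<close> fixes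
  \<open>r\<^sup>5/n = (n - 1)/2\<close>, which makes it equivalent to \<open>Ric = (n - 1)/2 (3 g + \<pi> \<otimes> \<pi>)\<close>;
  tracing with \<open>tr\<^sub>g (\<pi> \<otimes> \<pi>) = g(P, P) = -1\<close> gives the scalar curvature.\<close>

section \<open>Directional derivatives and smoothness\<close>

lemma sum_axis_mult: "(\<Sum>a\<in>UNIV. (axis i 1 :: real^'n::finite) $ a * f a) = f i"
  by (simp add: axis_def if_distrib if_distribR cong: if_cong)

lemma sum_mult_axis: "(\<Sum>a\<in>UNIV. f a * (axis i 1 :: real^'n::finite) $ a) = f i"
  by (simp add: axis_def if_distrib cong: if_cong)

lemma pd_eq_derivative:
  assumes "(f has_derivative f') (at x)"
  shows "pd i f x = f' (axis i 1)"
proof -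
  have "((\<lambda>t::real. x + t *\<^sub>R axis i 1) has_derivative (\<lambda>t. t *\<^sub>R axis i 1)) (at 0)"
    by (auto intro!: derivative_eq_intros)
  moreover have "(f has_derivative f') (at (x + (0::real) *\<^sub>R axis i 1))"
    using assms by simp
  ultimately have "((\<lambda>t. f (x + t *\<^sub>R axis i 1)) has_derivative (\<lambda>t. f' (t *\<^sub>R axis i 1))) (at 0)"
    by (rule has_derivative_compose)
  moreover have "(\<lambda>t. f' (t *\<^sub>R axis i 1)) = (\<lambda>t. f' (axis i 1) * t)"
    using has_derivative_linear[OF assms] by (simp add: linear_cmul mult.commute)
  ultimately have "((\<lambda>t. f (x + t *\<^sub>R axis i 1)) has_real_derivative f' (axis i 1)) (at 0)"
    by (simp add: has_field_derivative_def)
  then show ?thesis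
    unfolding pd_def by (rule DERIV_imp_deriv)
qed

lemma dfun_eq_derivative:
  assumes "(f has_derivative f') (at x)"
  shows "dfun X f x = f' (X x)"
proof -
  have lin: "linear f'"
    using assms has_derivative_linear by blast
  have "dfun X f x = (\<Sum>i\<in>UNIV. X x $ i * f' (axis i 1))"
    unfolding dfun_def using pd_eq_derivative[OF assms] by simp
  also have "\<dots> = f' (\<Sum>i\<in>UNIV. X x $ i *\<^sub>R axis i 1)"
    by (simp add: linear_sum[OF lin] linear_cmul[OF lin])
  also have "(\<Sum>i\<in>UNIV. X x $ i *\<^sub>R axis i 1) = X x"
    using basis_expansion[of "X x"] by (simp add: scalar_mult_eq_scaleR)
  finally show ?thesis .
qed

lemma dfun_eq_frechet_derivative:
  "f differentiable (at x) \<Longrightarrow> dfun X f x = frechet_derivative f (at x) (X x)"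
  by (rule dfun_eq_derivative) (simp add: frechet_derivative_works[symmetric])

lemma dfun_add:
  assumes "f differentiable (at x)" "h differentiable (at x)"
  shows "dfun X (\<lambda>y. f y + h y) x = dfun X f x + dfun X h x"
  unfolding dfun_eq_frechet_derivative[OF assms(1)] dfun_eq_frechet_derivative[OF assms(2)]
  using assms by (intro dfun_eq_derivative has_derivative_add) (simp_all add: frechet_derivative_works)

lemma dfun_diff:
  assumes "f differentiable (at x)" "h differentiable (at x)"
  shows "dfun X (\<lambda>y. f y - h y) x = dfun X f x - dfun X h x"
  unfolding dfun_eq_frechet_derivative[OF assms(1)] dfun_eq_frechet_derivative[OF assms(2)]
  using assms by (intro dfun_eq_derivative has_derivative_diff) (simp_all add: frechet_derivative_works)

lemma dfun_mult:
  fixes f h :: "real^'n::finite \<Rightarrow> real"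
  assumes "f differentiable (at x)" "h differentiable (at x)"
  shows "dfun X (\<lambda>y. f y * h y) x = f x * dfun X h x + dfun X f x * h x"
  unfolding dfun_eq_frechet_derivative[OF assms(1)] dfun_eq_frechet_derivative[OF assms(2)]
  using assms by (intro dfun_eq_derivative has_derivative_mult) (simp_all add: frechet_derivative_works)

lemma dfun_const: "dfun X (\<lambda>y. c) x = 0"
  using dfun_eq_derivative[of "\<lambda>y. c" "\<lambda>_. 0"] by simp

lemma dfun_sum:
  assumes "finite S" "\<And>a. a \<in> S \<Longrightarrow> f a differentiable (at x)"
  shows "dfun X (\<lambda>y. \<Sum>a\<in>S. f a y) x = (\<Sum>a\<in>S. dfun X (f a) x)"
proof -
  have "((\<lambda>y. \<Sum>a\<in>S. f a y) has_derivative (\<lambda>v. \<Sum>a\<in>S. frechet_derivative (f a) (at x) v)) (at x)"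
    using assms(2) by (intro has_derivative_sum) (simp add: frechet_derivative_works)
  then show ?thesis
    using assms(2) by (simp add: dfun_eq_derivative dfun_eq_frechet_derivative)
qed

lemma dfun_coord: "dfun (coord i) f x = pd i f x"
  by (simp add: dfun_def coord_def sum_axis_mult)

lemma pd_cong_open:
  assumes "open U" "x \<in> U" "\<And>y. y \<in> U \<Longrightarrow> f y = h y"
  shows "pd i f x = pd i h x"
proof -
  have "open ((\<lambda>t::real. x + t *\<^sub>R axis i 1) -` U)"
    by (rule continuous_open_vimage[OF assms(1)]) (intro continuous_intros)
  then have "eventually (\<lambda>t. t \<in> (\<lambda>t::real. x + t *\<^sub>R axis i 1) -` U) (nhds 0)"
    using assms(2) by (intro eventually_nhds_in_open) simp_all
  then have "eventually (\<lambda>t::real. f (x + t *\<^sub>R axis i 1) = h (x + t *\<^sub>R axis i 1)) (nhds 0)"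
    by eventually_elim (simp add: assms(3))
  then show ?thesis
    unfolding pd_def by (rule deriv_cong_ev) simp
qed

lemma dfun_cong_open:
  "open U \<Longrightarrow> x \<in> U \<Longrightarrow> (\<And>y. y \<in> U \<Longrightarrow> f y = h y) \<Longrightarrow> dfun X f x = dfun X h x"
  unfolding dfun_def by (simp add: pd_cong_open[of U x f h])

lemma pd_const: "pd i (\<lambda>y. c) = (\<lambda>y. 0)"
  unfolding pd_def by (simp add: fun_eq_iff)

lemma Ck_const: "Ck k U (\<lambda>y. c)"
  by (induction k arbitrary: c) (simp_all add: pd_const)

lemma smooth_fun_const: "smooth_fun U (\<lambda>y. c)"
  unfolding smooth_fun_def using Ck_const by blast

lemma smooth_vf_coord: "smooth_vf U (coord i)"
  unfolding smooth_vf_def coord_def using smooth_fun_const by blast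

lemma smooth_fun_pd: "smooth_fun U f \<Longrightarrow> smooth_fun U (pd i f)"
  unfolding smooth_fun_def by (metis Ck.simps(2))

lemma smooth_fun_differentiable:
  assumes "smooth_fun U f" "open U" "x \<in> U"
  shows "f differentiable (at x)"
proof -
  have "Ck (Suc 0) U f"
    using assms(1) unfolding smooth_fun_def by blast
  then show ?thesis
    using assms(2,3) differentiable_on_eq_differentiable_at by auto
qed

definition vf_differentiable :: "real^'n::finite \<Rightarrow> 'n vf \<Rightarrow> bool" where
  "vf_differentiable x W \<longleftrightarrow> (\<forall>k. (\<lambda>y. W y $ k) differentiable (at x))"

lemma vf_differentiable_add:
  "vf_differentiable x A \<Longrightarrow> vf_differentiable x B \<Longrightarrow> vf_differentiable x (\<lambda>y. A y + B y)"
  unfolding vf_differentiable_def by simp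

lemma vf_differentiable_scaleR:
  "f differentiable (at x) \<Longrightarrow> vf_differentiable x B \<Longrightarrow> vf_differentiable x (\<lambda>y. f y *\<^sub>R B y)"
  unfolding vf_differentiable_def by simp

lemma vf_differentiable_coord: "vf_differentiable x (coord i)"
  unfolding vf_differentiable_def coord_def by simp

lemma smooth_vf_differentiable:
  "smooth_vf U W \<Longrightarrow> open U \<Longrightarrow> x \<in> U \<Longrightarrow> vf_differentiable x W"
  unfolding vf_differentiable_def smooth_vf_def using smooth_fun_differentiable by blast

lemma smooth_vf_pd_differentiable:
  "smooth_vf U W \<Longrightarrow> open U \<Longrightarrow> x \<in> U \<Longrightarrow> (\<lambda>y. pd i (\<lambda>y. W y $ k) y) differentiable (at x)"
  unfolding smooth_vf_def using smooth_fun_differentiable smooth_fun_pd by blast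

lemma dvf_add:
  "vf_differentiable x A \<Longrightarrow> vf_differentiable x B \<Longrightarrow>
   dvf X (\<lambda>y. A y + B y) x = dvf X A x + dvf X B x"
  unfolding vf_differentiable_def by (simp add: dvf_def vec_eq_iff dfun_add)

lemma dvf_diff:
  "vf_differentiable x A \<Longrightarrow> vf_differentiable x B \<Longrightarrow>
   dvf X (\<lambda>y. A y - B y) x = dvf X A x - dvf X B x"
  unfolding vf_differentiable_def by (simp add: dvf_def vec_eq_iff dfun_diff)

lemma dvf_scaleR:
  "f differentiable (at x) \<Longrightarrow> vf_differentiable x W \<Longrightarrow>
   dvf X (\<lambda>y. f y *\<^sub>R W y) x = dfun X f x *\<^sub>R W x + f x *\<^sub>R dvf X W x"
  unfolding vf_differentiable_def by (simp add: dvf_def vec_eq_iff dfun_mult)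

section \<open>Matrices\<close>

lemma differentiable_prod:
  fixes f :: "'i \<Rightarrow> 'a::real_normed_vector \<Rightarrow> real"
  assumes "\<And>i. i \<in> I \<Longrightarrow> f i differentiable (at x)"
  shows "(\<lambda>y. \<Prod>i\<in>I. f i y) differentiable (at x)"
proof -
  have "\<And>i. i \<in> I \<Longrightarrow> (f i has_derivative frechet_derivative (f i) (at x)) (at x)"
    using assms frechet_derivative_works by blast
  then have "((\<lambda>y. \<Prod>i\<in>I. f i y) has_derivative
      (\<lambda>y. \<Sum>i\<in>I. frechet_derivative (f i) (at x) y * (\<Prod>j\<in>I - {i}. f j x))) (at x)"
    by (rule has_derivative_prod)
  then show ?thesis
    unfolding differentiable_def by blast
qed

lemma differentiable_det:
  fixes M :: "real^'m \<Rightarrow> real^'n::finite^'n"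
  assumes "\<And>a b. (\<lambda>y. M y $ a $ b) differentiable (at x)"
  shows "(\<lambda>y. det (M y)) differentiable (at x)"
  unfolding det_def
  by (intro differentiable_sum ballI differentiable_mult differentiable_const
      differentiable_prod assms) (simp add: finite_permutations)

lemma matrix_inv_mult:
  fixes A :: "real^'n::finite^'n"
  assumes "invertible A"
  shows "A ** matrix_inv A = mat 1" "matrix_inv A ** A = mat 1"
proof -
  have "\<exists>A'. A ** A' = mat 1 \<and> A' ** A = mat 1"
    using assms unfolding invertible_def by blast
  then have "A ** matrix_inv A = mat 1 \<and> matrix_inv A ** A = mat 1"
    unfolding matrix_inv_def by (rule someI_ex)
  then show "A ** matrix_inv A = mat 1" "matrix_inv A ** A = mat 1"
    by auto
qed

lemma matrix_inv_entry_cramer: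
  fixes A :: "real^'n::finite^'n"
  assumes "invertible A"
  shows "matrix_inv A $ j $ k = det (\<chi> a b. if b = j then axis k 1 $ a else A $ a $ b) / det A"
proof -
  have "A *v (matrix_inv A *v axis k 1) = axis k 1"
    by (simp add: matrix_vector_mul_assoc matrix_inv_mult[OF assms])
  moreover have "det A \<noteq> 0"
    using assms invertible_det_nz by blast
  ultimately have "matrix_inv A *v axis k 1
      = (\<chi> j. det (\<chi> a b. if b = j then axis k 1 $ a else A $ a $ b) / det A)"
    by (subst (asm) cramer)
  moreover have "(matrix_inv A *v axis k 1) $ j = matrix_inv A $ j $ k"
    by (simp add: matrix_vector_mult_def sum_mult_axis)
  ultimately show ?thesis
    by simp
qed

lemma lorentzian_matrix_invertible:
  fixes G :: "real^'n::finite^'n"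
  assumes "lorentzian_matrix G"
  shows "invertible G"
proof -
  obtain A :: "real^'n^'n" and i0 where A: "invertible A"
    "transpose A ** G ** A = (\<chi> i j. if i = j then (if i = i0 then -1 else 1) else 0)"
    using assms unfolding lorentzian_matrix_def by blast
  let ?D = "(\<chi> i j. if i = j then (if i = i0 then -1 else 1) else 0) :: real^'n^'n"
  have "det ?D = (\<Prod>i\<in>UNIV. ?D $ i $ i)"
    by (rule det_diagonal) simp
  also have "\<dots> \<noteq> 0"
    by (simp add: prod_zero_iff)
  finally have "det (transpose A ** G ** A) \<noteq> 0"
    using A by simp
  then show ?thesis
    by (simp add: det_mul invertible_det_nz)
qed

definition mform :: "real^'n::finite^'n \<Rightarrow> real^'n \<Rightarrow> real^'n \<Rightarrow> real" where
  "mform G v w = v \<bullet> (G *v w)"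

lemma mform_add [simp]:
  "mform G (a + b) w = mform G a w + mform G b w"
  "mform G v (a + b) = mform G v a + mform G v b"
  by (simp_all add: mform_def inner_add_left inner_add_right matrix_vector_right_distrib)

lemma mform_diff [simp]:
  "mform G (a - b) w = mform G a w - mform G b w"
  "mform G v (a - b) = mform G v a - mform G v b"
  by (simp_all add: mform_def inner_diff_left inner_diff_right matrix_vector_mult_diff_distrib)

lemma mform_scaleR [simp]:
  "mform G (c *\<^sub>R a) w = c * mform G a w"
  "mform G v (c *\<^sub>R a) = c * mform G v a"
  by (simp_all add: mform_def matrix_vector_mult_scaleR)

lemma mform_axis_left: "mform G (axis j 1) w = (G *v w) $ j"
  by (simp add: mform_def inner_axis')

lemma mform_eq_sum: "mform G v w = (\<Sum>a\<in>UNIV. \<Sum>b\<in>UNIV. v $ a * G $ a $ b * w $ b)"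
  by (simp add: mform_def inner_vec_def matrix_vector_mult_def sum_distrib_left mult.assoc)

lemma mform_eq_sum_left: "mform G v w = (\<Sum>a\<in>UNIV. v $ a * (G *v w) $ a)"
  by (simp add: mform_def inner_vec_def)

lemma mform_sym:
  assumes "transpose G = G"
  shows "mform G v w = mform G w v"
proof -
  have "G $ a $ b = G $ b $ a" for a b
    using arg_cong[OF assms, of "\<lambda>M. M $ b $ a"] by (simp add: transpose_def)
  then show ?thesis
    unfolding mform_eq_sum by (subst sum.swap) (simp add: mult.commute mult.left_commute)
qed

lemma gf_mform: "gf g X Y x = mform (g x) (X x) (Y x)"
  by (simp add: gf_def mform_def)

lemma pif_mform: "pif g P Y x = mform (g x) (Y x) (P x)"
  by (simp add: pif_def gf_mform)

section \<open>The Levi-Civita connection\<close>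

definition chr_vec :: "'n::finite metric \<Rightarrow> real^'n \<Rightarrow> real^'n \<Rightarrow> real^'n \<Rightarrow> real^'n" where
  "chr_vec g x v w = (\<chi> k. \<Sum>i\<in>UNIV. \<Sum>j\<in>UNIV. chr g x k i j * v $ i * w $ j)"

definition chr_lower :: "'n::finite metric \<Rightarrow> real^'n \<Rightarrow> 'n \<Rightarrow> 'n \<Rightarrow> 'n \<Rightarrow> real" where
  "chr_lower g x b i j =
     1/2 * (pd i (\<lambda>y. g y $ j $ b) x + pd j (\<lambda>y. g y $ i $ b) x - pd b (\<lambda>y. g y $ i $ j) x)"

lemma nablaG_eq: "nablaG g X Y x = dvf X Y x + chr_vec g x (X x) (Y x)"
  by (simp add: nablaG_def chr_vec_def)

lemma chr_vec_add: "chr_vec g x v (a + b) = chr_vec g x v a + chr_vec g x v b"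
  by (simp add: chr_vec_def vec_eq_iff distrib_left sum.distrib)

lemma chr_vec_diff: "chr_vec g x v (a - b) = chr_vec g x v a - chr_vec g x v b"
  by (simp add: chr_vec_def vec_eq_iff right_diff_distrib sum_subtractf)

lemma chr_vec_scaleR: "chr_vec g x v (c *\<^sub>R a) = c *\<^sub>R chr_vec g x v a"
  by (simp add: chr_vec_def vec_eq_iff sum_distrib_left mult.left_commute)

lemma nablaG_add:
  "vf_differentiable x A \<Longrightarrow> vf_differentiable x B \<Longrightarrow>
   nablaG g X (\<lambda>y. A y + B y) x = nablaG g X A x + nablaG g X B x"
  by (simp add: nablaG_eq dvf_add chr_vec_add)

lemma nablaG_diff:
  "vf_differentiable x A \<Longrightarrow> vf_differentiable x B \<Longrightarrow>
   nablaG g X (\<lambda>y. A y - B y) x = nablaG g X A x - nablaG g X B x"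
  by (simp add: nablaG_eq dvf_diff chr_vec_diff)

lemma nablaG_scaleR:
  "f differentiable (at x) \<Longrightarrow> vf_differentiable x W \<Longrightarrow>
   nablaG g X (\<lambda>y. f y *\<^sub>R W y) x = dfun X f x *\<^sub>R W x + f x *\<^sub>R nablaG g X W x"
  by (simp add: nablaG_eq dvf_scaleR chr_vec_scaleR algebra_simps)

lemma nablaG_cong_open:
  assumes "open U" "x \<in> U" "\<And>y. y \<in> U \<Longrightarrow> A y = B y"
  shows "nablaG g X A x = nablaG g X B x"
proof -
  have "dfun X (\<lambda>y. A y $ k) x = dfun X (\<lambda>y. B y $ k) x" for k
    by (rule dfun_cong_open[OF assms(1,2)]) (simp add: assms(3))
  then have "dvf X A x = dvf X B x"
    by (simp add: dvf_def vec_eq_iff)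
  then show ?thesis
    by (simp add: nablaG_eq assms(2,3))
qed

lemma nablaG_coord_component:
  "nablaG g (coord i) Y x $ k = pd i (\<lambda>y. Y y $ k) x + (\<Sum>b\<in>UNIV. chr g x k i b * Y x $ b)"
proof -
  have "(\<Sum>a\<in>UNIV. \<Sum>b\<in>UNIV. chr g x k a b * axis i 1 $ a * Y x $ b)
      = (\<Sum>a\<in>UNIV. axis i 1 $ a * (\<Sum>b\<in>UNIV. chr g x k a b * Y x $ b))"
    by (simp add: sum_distrib_left mult_ac)
  then show ?thesis
    by (simp add: nablaG_def dvf_def dfun_coord) (simp add: coord_def sum_axis_mult)
qed

lemma nablaG_linear_left: "nablaG g W Y x = (\<Sum>i\<in>UNIV. W x $ i *\<^sub>R nablaG g (coord i) Y x)"
proof -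
  have "nablaG g W Y x $ k = (\<Sum>i\<in>UNIV. W x $ i * nablaG g (coord i) Y x $ k)" for k
    unfolding nablaG_coord_component
    by (simp add: nablaG_def dvf_def dfun_def distrib_left sum.distrib sum_distrib_left mult_ac)
  then show ?thesis
    by (simp add: vec_eq_iff)
qed

lemma sum_symmetrize3:
  fixes v w z :: "'n::finite \<Rightarrow> real"
  shows "(\<Sum>a\<in>UNIV. \<Sum>b\<in>UNIV. \<Sum>i\<in>UNIV. w a * v i * z b * (C b i a + C a i b))
    = (\<Sum>b\<in>UNIV. \<Sum>i\<in>UNIV. \<Sum>j\<in>UNIV. z b * v i * w j * C b i j)
    + (\<Sum>a\<in>UNIV. \<Sum>i\<in>UNIV. \<Sum>j\<in>UNIV. w a * v i * z j * C a i j)"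
proof -
  have "(\<Sum>a\<in>UNIV. \<Sum>b\<in>UNIV. \<Sum>i\<in>UNIV. w a * v i * z b * C b i a)
      = (\<Sum>b\<in>UNIV. \<Sum>i\<in>UNIV. \<Sum>a\<in>UNIV. z b * v i * w a * C b i a)"
    by (subst sum.swap, subst (2) sum.swap) (simp add: mult_ac)
  moreover have "(\<Sum>a\<in>UNIV. \<Sum>b\<in>UNIV. \<Sum>i\<in>UNIV. w a * v i * z b * C a i b)
      = (\<Sum>a\<in>UNIV. \<Sum>i\<in>UNIV. \<Sum>b\<in>UNIV. w a * v i * z b * C a i b)"
    by (subst (2) sum.swap) simp
  ultimately show ?thesis
    by (simp add: distrib_left sum.distrib)
qed

locale metric_chart =
  fixes U :: "(real^'n::finite) set" and g :: "'n metric"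
  assumes open_U: "open U"
    and smooth_g: "smooth_metric U g"
    and symmetric: "\<And>x. x \<in> U \<Longrightarrow> transpose (g x) = g x"
    and invertible: "\<And>x. x \<in> U \<Longrightarrow> invertible (g x)"
begin

lemma metric_entry_sym: "x \<in> U \<Longrightarrow> g x $ a $ b = g x $ b $ a"
  using arg_cong[OF symmetric, of x "\<lambda>M. M $ b $ a"] by (simp add: transpose_def)

lemma mform_metric_sym: "x \<in> U \<Longrightarrow> mform (g x) v w = mform (g x) w v"
  by (rule mform_sym[OF symmetric])

lemma gf_sym: "x \<in> U \<Longrightarrow> gf g X Y x = gf g Y X x"
  by (simp add: gf_mform mform_metric_sym)

lemma metric_mult_ginv:
  assumes "x \<in> U"
  shows "g x ** ginv g x = mat 1" "ginv g x ** g x = mat 1"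
  using matrix_inv_mult[OF invertible[OF assms]] by (simp_all add: ginv_def)

lemma differentiable_metric: "x \<in> U \<Longrightarrow> (\<lambda>y. g y $ a $ b) differentiable (at x)"
  using smooth_g open_U smooth_fun_differentiable unfolding smooth_metric_def by blast

lemma differentiable_pd_metric: "x \<in> U \<Longrightarrow> pd k (\<lambda>y. g y $ a $ b) differentiable (at x)"
  using smooth_g open_U smooth_fun_differentiable smooth_fun_pd unfolding smooth_metric_def by blast

lemma differentiable_ginv:
  assumes x: "x \<in> U"
  shows "(\<lambda>y. ginv g y $ a $ b) differentiable (at x)"
proof -
  let ?M = "\<lambda>y. \<chi> c d. if d = a then axis b 1 $ c else g y $ c $ d"
  have "(\<lambda>y. if d = a then c else g y $ e $ d) differentiable (at x)" for c d e
    by (cases "d = a") (simp_all add: differentiable_metric[OF x])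
  then have "(\<lambda>y. det (?M y)) differentiable (at x)"
    by (intro differentiable_det) simp
  moreover have "(\<lambda>y. det (g y)) differentiable (at x)"
    by (rule differentiable_det) (rule differentiable_metric[OF x])
  moreover have "det (g x) \<noteq> 0"
    using invertible[OF x] invertible_det_nz by blast
  ultimately have "(\<lambda>y. det (?M y) / det (g y)) differentiable (at x)"
    by (rule differentiable_divide)
  then obtain D where "((\<lambda>y. det (?M y) / det (g y)) has_derivative D) (at x)"
    unfolding differentiable_def by blast
  moreover have "\<And>y. y \<in> U \<Longrightarrow> det (?M y) / det (g y) = ginv g y $ a $ b"
    using matrix_inv_entry_cramer[OF invertible] by (simp add: ginv_def)
  ultimately have "((\<lambda>y. ginv g y $ a $ b) has_derivative D) (at x)"
    by (rule has_derivative_transform_within_open[OF _ open_U x])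
  then show ?thesis
    unfolding differentiable_def by blast
qed

lemma differentiable_chr:
  assumes "x \<in> U"
  shows "(\<lambda>y. chr g y k i j) differentiable (at x)"
  unfolding chr_def
  by (intro differentiable_mult differentiable_const differentiable_sum ballI finite_UNIV
      differentiable_diff differentiable_add differentiable_ginv differentiable_pd_metric assms)
     simp_all

lemma differentiable_gf:
  assumes "x \<in> U" "vf_differentiable x A" "vf_differentiable x B"
  shows "gf g A B differentiable (at x)"
proof -
  have "gf g A B = (\<lambda>y. \<Sum>a\<in>UNIV. \<Sum>b\<in>UNIV. A y $ a * g y $ a $ b * B y $ b)"
    by (simp add: fun_eq_iff gf_mform mform_eq_sum)
  then show ?thesis
    using assms unfolding vf_differentiable_def
    by (simp add: differentiable_mult differentiable_sum differentiable_metric)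
qed

lemma vf_differentiable_nablaG:
  assumes x: "x \<in> U" and A: "smooth_vf U A" and B: "smooth_vf U B"
  shows "vf_differentiable x (nablaG g A B)"
  unfolding vf_differentiable_def nablaG_def dvf_def dfun_def
  using smooth_vf_differentiable[OF A open_U x] smooth_vf_differentiable[OF B open_U x]
    smooth_vf_pd_differentiable[OF B open_U x] differentiable_chr[OF x]
  unfolding vf_differentiable_def
  by (simp add: differentiable_add differentiable_sum differentiable_mult)

lemma pd_metric_sym: "x \<in> U \<Longrightarrow> pd l (\<lambda>y. g y $ i $ j) x = pd l (\<lambda>y. g y $ j $ i) x"
  by (rule pd_cong_open[OF open_U]) (auto simp: metric_entry_sym)

lemma chr_sym: "x \<in> U \<Longrightarrow> chr g x k i j = chr g x k j i"
  unfolding chr_def by (simp add: pd_metric_sym[of x _ i j] add.commute)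

lemma chr_vec_sym: "x \<in> U \<Longrightarrow> chr_vec g x v w = chr_vec g x w v"
  unfolding chr_vec_def vec_eq_iff by (auto, subst sum.swap) (simp add: chr_sym[of x] mult_ac)

lemma nablaG_torsion_free: "x \<in> U \<Longrightarrow> nablaG g X Y x - nablaG g Y X x = lie X Y x"
  by (simp add: nablaG_eq lie_def chr_vec_sym[of x "X x"])

lemma sum_metric_chr:
  assumes x: "x \<in> U"
  shows "(\<Sum>a\<in>UNIV. g x $ b $ a * chr g x a i j) = chr_lower g x b i j"
proof -
  let ?F = "\<lambda>l. pd i (\<lambda>y. g y $ j $ l) x + pd j (\<lambda>y. g y $ i $ l) x - pd l (\<lambda>y. g y $ i $ j) x"
  have "(\<Sum>a\<in>UNIV. g x $ b $ a * chr g x a i j)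
      = 1/2 * (\<Sum>l\<in>UNIV. \<Sum>a\<in>UNIV. g x $ b $ a * ginv g x $ a $ l * ?F l)"
    unfolding chr_def by (subst sum.swap) (simp add: sum_distrib_left mult_ac)
  also have "\<dots> = 1/2 * (\<Sum>l\<in>UNIV. (g x ** ginv g x) $ b $ l * ?F l)"
    by (simp add: matrix_matrix_mult_def sum_distrib_right)
  also have "\<dots> = chr_lower g x b i j"
    by (simp add: metric_mult_ginv[OF x] mat_def chr_lower_def if_distrib if_distribR cong: if_cong)
  finally show ?thesis .
qed

lemma sum_metric_chr_vec:
  assumes x: "x \<in> U"
  shows "(\<Sum>a\<in>UNIV. g x $ b $ a * chr_vec g x v w $ a)
    = (\<Sum>i\<in>UNIV. \<Sum>j\<in>UNIV. v $ i * w $ j * chr_lower g x b i j)"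
proof -
  have "(\<Sum>a\<in>UNIV. g x $ b $ a * chr_vec g x v w $ a)
      = (\<Sum>a\<in>UNIV. \<Sum>i\<in>UNIV. \<Sum>j\<in>UNIV. v $ i * w $ j * (g x $ b $ a * chr g x a i j))"
    by (simp add: chr_vec_def sum_distrib_left mult_ac)
  also have "\<dots> = (\<Sum>i\<in>UNIV. \<Sum>j\<in>UNIV. \<Sum>a\<in>UNIV. v $ i * w $ j * (g x $ b $ a * chr g x a i j))"
    by (subst sum.swap) (rule sum.cong[OF refl], rule sum.swap)
  finally show ?thesis
    by (simp add: sum_distrib_left[symmetric] sum_metric_chr[OF x])
qed

lemma mform_chr_vec:
  assumes x: "x \<in> U"
  shows "mform (g x) (chr_vec g x v w) z
    = (\<Sum>b\<in>UNIV. \<Sum>i\<in>UNIV. \<Sum>j\<in>UNIV. z $ b * v $ i * w $ j * chr_lower g x b i j)"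
proof -
  have "mform (g x) (chr_vec g x v w) z = mform (g x) z (chr_vec g x v w)"
    by (rule mform_metric_sym[OF x])
  also have "\<dots> = (\<Sum>b\<in>UNIV. z $ b * (\<Sum>a\<in>UNIV. g x $ b $ a * chr_vec g x v w $ a))"
    by (simp add: mform_eq_sum_left matrix_vector_mult_def)
  finally show ?thesis
    by (simp add: sum_metric_chr_vec[OF x] sum_distrib_left mult_ac)
qed

lemma chr_vec_metric_compatible:
  assumes x: "x \<in> U"
  shows "mform (g x) (chr_vec g x v w) z + mform (g x) w (chr_vec g x v z)
    = (\<Sum>a\<in>UNIV. \<Sum>b\<in>UNIV. \<Sum>i\<in>UNIV. w $ a * v $ i * z $ b * pd i (\<lambda>y. g y $ a $ b) x)"
proof -
  have pd: "pd i (\<lambda>y. g y $ a $ b) x = chr_lower g x b i a + chr_lower g x a i b" for a b i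
    unfolding chr_lower_def using pd_metric_sym[OF x, of i b a] by (simp add: field_simps)
  have "mform (g x) (chr_vec g x v w) z + mform (g x) w (chr_vec g x v z)
      = (\<Sum>b\<in>UNIV. \<Sum>i\<in>UNIV. \<Sum>j\<in>UNIV. z $ b * v $ i * w $ j * chr_lower g x b i j)
      + (\<Sum>a\<in>UNIV. \<Sum>i\<in>UNIV. \<Sum>j\<in>UNIV. w $ a * v $ i * z $ j * chr_lower g x a i j)"
    by (simp only: mform_metric_sym[OF x, of w] mform_chr_vec[OF x])
  also have "\<dots> = (\<Sum>a\<in>UNIV. \<Sum>b\<in>UNIV. \<Sum>i\<in>UNIV.
      w $ a * v $ i * z $ b * (chr_lower g x b i a + chr_lower g x a i b))"
    by (rule sum_symmetrize3[symmetric])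
  finally show ?thesis
    by (simp only: pd)
qed

lemma dfun_gf:
  assumes x: "x \<in> U" and Y: "vf_differentiable x Y" and Z: "vf_differentiable x Z"
  shows "dfun X (gf g Y Z) x = mform (g x) (dvf X Y x) (Z x) + mform (g x) (Y x) (dvf X Z x)
    + (\<Sum>a\<in>UNIV. \<Sum>b\<in>UNIV. \<Sum>i\<in>UNIV. Y x $ a * X x $ i * Z x $ b * pd i (\<lambda>y. g y $ a $ b) x)"
proof -
  have dY: "(\<lambda>y. Y y $ a) differentiable (at x)" and dZ: "(\<lambda>y. Z y $ a) differentiable (at x)"
    and dg: "(\<lambda>y. g y $ a $ b) differentiable (at x)" for a b
    using Y Z differentiable_metric[OF x] unfolding vf_differentiable_def by blast+
  have "dfun X (\<lambda>y. Y y $ a * g y $ a $ b * Z y $ b) x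
      = dfun X (\<lambda>y. Y y $ a) x * g x $ a $ b * Z x $ b + Y x $ a * g x $ a $ b * dfun X (\<lambda>y. Z y $ b) x
      + (\<Sum>i\<in>UNIV. Y x $ a * X x $ i * Z x $ b * pd i (\<lambda>y. g y $ a $ b) x)" for a b
    by (simp add: dfun_mult differentiable_mult dY dZ dg)
       (simp add: dfun_def sum_distrib_left sum_distrib_right algebra_simps)
  moreover have "dfun X (gf g Y Z) x
      = (\<Sum>a\<in>UNIV. \<Sum>b\<in>UNIV. dfun X (\<lambda>y. Y y $ a * g y $ a $ b * Z y $ b) x)"
    unfolding gf_mform mform_eq_sum
    by (simp add: dfun_sum differentiable_sum differentiable_mult dY dZ dg)
  ultimately show ?thesis
    by (simp add: mform_eq_sum dvf_def sum.distrib)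
qed

lemma nablaG_metric_compatible:
  assumes x: "x \<in> U" and Y: "vf_differentiable x Y" and Z: "vf_differentiable x Z"
  shows "dfun X (gf g Y Z) x = gf g (nablaG g X Y) Z x + gf g Y (nablaG g X Z) x"
  using chr_vec_metric_compatible[OF x, of "X x" "Y x" "Z x"]
  by (simp add: dfun_gf[OF assms] gf_mform nablaG_eq)

end

section \<open>Curvature of a unit timelike concircular field\<close>

locale unit_concircular_chart = metric_chart U g for U :: "(real^'n::finite) set" and g +
  fixes P :: "'n vf"
  assumes smooth_P: "smooth_vf U P"
    and concircular_P: "concircular U g P"
    and unit_P: "\<And>x. x \<in> U \<Longrightarrow> gf g P P x = -1"
begin

lemma pif_eq_gf: "pif g P W = gf g W P"
  by (simp add: fun_eq_iff pif_def)

lemma vf_differentiable_if_smooth: "smooth_vf U B \<Longrightarrow> x \<in> U \<Longrightarrow> vf_differentiable x B"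
  by (rule smooth_vf_differentiable[OF _ open_U])

lemma differentiable_gf_smooth:
  "smooth_vf U B \<Longrightarrow> smooth_vf U C \<Longrightarrow> x \<in> U \<Longrightarrow> gf g B C differentiable (at x)"
  by (intro differentiable_gf vf_differentiable_if_smooth)

lemma differentiable_pif: "smooth_vf U B \<Longrightarrow> x \<in> U \<Longrightarrow> pif g P B differentiable (at x)"
  unfolding pif_eq_gf by (intro differentiable_gf_smooth smooth_P)

lemma pif_coord: "pif g P (coord i) x = (g x *v P x) $ i"
  by (simp add: pif_mform coord_def mform_axis_left)

lemma gf_coord: "gf g (coord j) W x = (g x *v W x) $ j"
  by (simp add: gf_mform coord_def mform_axis_left)

lemma pif_coord_nonzero:
  assumes x: "x \<in> U"
  obtains i where "pif g P (coord i) x \<noteq> 0"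
proof (cases "g x *v P x = 0")
  case True
  then have "gf g P P x = 0"
    by (simp add: gf_def)
  with unit_P[OF x] show ?thesis
    by simp
next
  case False
  then show ?thesis
    using that by (auto simp: pif_coord vec_eq_iff)
qed

context
  fixes \<omega> :: "real^'n \<Rightarrow> real"
  assumes concircular_eq: "\<And>X Y y. smooth_vf U X \<Longrightarrow> smooth_vf U Y \<Longrightarrow> y \<in> U \<Longrightarrow>
    dfun X (pif g P Y) y - pif g P (nablaG g X Y) y - pif g P X y * pif g P Y y = \<omega> y * gf g X Y y"
begin

lemma nablaG_coord_P:
  assumes x: "x \<in> U"
  shows "nablaG g (coord i) P x = pif g P (coord i) x *\<^sub>R P x + \<omega> x *\<^sub>R axis i 1"
proof -
  have "(g x *v nablaG g (coord i) P x) $ j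
      = pif g P (coord i) x * (g x *v P x) $ j + \<omega> x * (g x *v axis i 1) $ j" for j
  proof -
    have "dfun (coord i) (gf g (coord j) P) x
        = gf g (nablaG g (coord i) (coord j)) P x + gf g (coord j) (nablaG g (coord i) P) x"
      by (intro nablaG_metric_compatible x vf_differentiable_coord vf_differentiable_if_smooth smooth_P)
    moreover have "gf g (coord i) (coord j) x = (g x *v axis i 1) $ j"
      by (subst gf_sym[OF x], subst gf_coord) (simp add: coord_def)
    ultimately show ?thesis
      using concircular_eq[OF smooth_vf_coord smooth_vf_coord x, of i j]
      by (simp add: pif_eq_gf gf_coord pif_coord[unfolded pif_eq_gf])
  qed
  then have "g x *v nablaG g (coord i) P x = g x *v (pif g P (coord i) x *\<^sub>R P x + \<omega> x *\<^sub>R axis i 1)"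
    by (simp add: vec_eq_iff matrix_vector_mult_scaleR matrix_vector_right_distrib)
  then show ?thesis
    using inj_matrix_vector_mult[OF invertible[OF x]] by (simp add: inj_eq)
qed

lemma concircular_factor_eq_1:
  assumes x: "x \<in> U"
  shows "\<omega> x = 1"
proof -
  have "(\<omega> x - 1) * pif g P (coord i) x = 0" for i
  proof -
    have "dfun (coord i) (gf g P P) x = dfun (coord i) (\<lambda>y. -1) x"
      by (rule dfun_cong_open[OF open_U x]) (simp add: unit_P)
    moreover have "dfun (coord i) (gf g P P) x = 2 * gf g (nablaG g (coord i) P) P x"
      using nablaG_metric_compatible[OF x, of P P "coord i"] gf_sym[OF x, of P]
      by (simp add: vf_differentiable_if_smooth smooth_P x)
    ultimately have "gf g (nablaG g (coord i) P) P x = 0"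
      by (simp add: dfun_const)
    then have "mform (g x) (pif g P (coord i) x *\<^sub>R P x + \<omega> x *\<^sub>R axis i 1) (P x) = 0"
      by (simp only: gf_mform nablaG_coord_P[OF x])
    then show ?thesis
      using unit_P[OF x]
      by (simp add: nablaG_coord_P[OF x] gf_mform pif_mform coord_def algebra_simps)
  qed
  moreover obtain i where "pif g P (coord i) x \<noteq> 0"
    using pif_coord_nonzero[OF x] .
  ultimately show ?thesis
    by (metis eq_iff_diff_eq_0 mult_eq_0_iff)
qed

end

lemma dfun_pif:
  assumes "smooth_vf U X" "smooth_vf U Y" "x \<in> U"
  shows "dfun X (pif g P Y) x = pif g P (nablaG g X Y) x + pif g P X x * pif g P Y x + gf g X Y x"
proof -
  obtain \<omega> where \<omega>: "\<And>X Y y. smooth_vf U X \<Longrightarrow> smooth_vf U Y \<Longrightarrow> y \<in> U \<Longrightarrow>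
    dfun X (pif g P Y) y - pif g P (nablaG g X Y) y - pif g P X y * pif g P Y y = \<omega> y * gf g X Y y"
    using concircular_P unfolding concircular_def by blast
  show ?thesis
    using \<omega>[OF assms] concircular_factor_eq_1[OF \<omega> assms(3)] by simp
qed

lemma nablaG_P:
  assumes x: "x \<in> U"
  shows "nablaG g W P x = W x + pif g P W x *\<^sub>R P x"
proof -
  have "nablaG g (coord i) P x = pif g P (coord i) x *\<^sub>R P x + 1 *\<^sub>R axis i 1" for i
    by (rule nablaG_coord_P[OF _ x]) (simp add: dfun_pif)
  then have "nablaG g W P x = (\<Sum>i\<in>UNIV. W x $ i *\<^sub>R (pif g P (coord i) x *\<^sub>R P x + axis i 1))"
    by (subst nablaG_linear_left) simp
  also have "\<dots> = (\<Sum>i\<in>UNIV. W x $ i * pif g P (coord i) x) *\<^sub>R P x + (\<Sum>i\<in>UNIV. W x $ i *\<^sub>R axis i 1)"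
    by (simp add: scaleR_add_right sum.distrib scaleR_sum_left)
  also have "(\<Sum>i\<in>UNIV. W x $ i *\<^sub>R axis i 1) = W x"
    using basis_expansion[of "W x"] by (simp add: scalar_mult_eq_scaleR)
  also have "(\<Sum>i\<in>UNIV. W x $ i * pif g P (coord i) x) = pif g P W x"
    by (simp only: pif_coord) (simp add: pif_mform mform_eq_sum_left)
  finally show ?thesis
    by simp
qed

lemma nablaG_nablaG_P:
  assumes A: "smooth_vf U A" and B: "smooth_vf U B" and x: "x \<in> U"
  shows "nablaG g A (nablaG g B P) x = nablaG g A B x
     + (pif g P (nablaG g A B) x + pif g P A x * pif g P B x + gf g A B x) *\<^sub>R P x
     + pif g P B x *\<^sub>R (A x + pif g P A x *\<^sub>R P x)"
proof -
  have "nablaG g A (nablaG g B P) x = nablaG g A (\<lambda>y. B y + pif g P B y *\<^sub>R P y) x"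
    by (rule nablaG_cong_open[OF open_U x]) (simp add: nablaG_P)
  also have "\<dots> = nablaG g A B x + (dfun A (pif g P B) x *\<^sub>R P x + pif g P B x *\<^sub>R nablaG g A P x)"
    by (simp add: nablaG_add nablaG_scaleR vf_differentiable_scaleR differentiable_pif
        vf_differentiable_if_smooth A B x smooth_P)
  finally show ?thesis
    by (simp add: dfun_pif[OF A B x] nablaG_P[OF x] add.assoc)
qed

lemma curv_nablaG_P:
  assumes A: "smooth_vf U A" and B: "smooth_vf U B" and x: "x \<in> U"
  shows "curv (nablaG g) A B P x = pif g P B x *\<^sub>R A x - pif g P A x *\<^sub>R B x"
proof -
  have lie: "lie A B x = nablaG g A B x - nablaG g B A x"
    using nablaG_torsion_free[OF x] by simp
  show ?thesis
    unfolding curv_def nablaG_nablaG_P[OF A B x] nablaG_nablaG_P[OF B A x] nablaG_P[OF x, of "lie A B"]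
    by (simp add: lie pif_mform gf_sym[OF x, of B A] algebra_simps)
qed

lemma RicG_P:
  assumes B: "smooth_vf U B" and x: "x \<in> U"
  shows "RicG g B P x = (real CARD('n) - 1) * pif g P B x"
proof -
  have "RicG g B P x = (\<Sum>i\<in>UNIV. pif g P B x * axis i 1 $ i - pif g P (coord i) x * B x $ i)"
    unfolding RicG_def ricci_def
    by (simp add: curv_nablaG_P[OF smooth_vf_coord B x]) (simp add: coord_def)
  also have "\<dots> = pif g P B x * real CARD('n) - pif g P B x"
    by (simp only: pif_coord)
       (simp add: sum_subtractf sum_distrib_left[symmetric] axis_def pif_mform mform_eq_sum_left
        mult.commute)
  finally show ?thesis
    by (simp add: algebra_simps)
qed

lemma nabla1_nabla1:
  assumes A: "smooth_vf U A" and B: "smooth_vf U B" and C: "smooth_vf U C" and x: "x \<in> U"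
  shows "nabla1 g P A (nabla1 g P B C) x = nablaG g A (nablaG g B C) x
     + (pif g P (nablaG g A C) x + pif g P A x * pif g P C x + gf g A C x) *\<^sub>R B x
     + pif g P C x *\<^sub>R nablaG g A B x
     - (gf g (nablaG g A B) C x + gf g B (nablaG g A C) x) *\<^sub>R P x
     - gf g B C x *\<^sub>R (A x + pif g P A x *\<^sub>R P x)
     + pif g P (nabla1 g P B C) x *\<^sub>R A x - gf g A (nabla1 g P B C) x *\<^sub>R P x"
proof -
  have dB: "vf_differentiable x B" and dC: "vf_differentiable x C" and dP: "vf_differentiable x P"
    using A B C x smooth_P vf_differentiable_if_smooth by blast+
  have "nabla1 g P B C = (\<lambda>y. (nablaG g B C y + pif g P C y *\<^sub>R B y) - gf g B C y *\<^sub>R P y)"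
    by (simp add: fun_eq_iff nabla1_def)
  then have "nablaG g A (nabla1 g P B C) x
      = nablaG g A (nablaG g B C) x + (dfun A (pif g P C) x *\<^sub>R B x + pif g P C x *\<^sub>R nablaG g A B x)
        - (dfun A (gf g B C) x *\<^sub>R P x + gf g B C x *\<^sub>R nablaG g A P x)"
    by (simp add: nablaG_diff nablaG_add nablaG_scaleR vf_differentiable_add vf_differentiable_scaleR
        vf_differentiable_nablaG differentiable_pif differentiable_gf_smooth dB dC dP B C x)
  then show ?thesis
    by (simp add: nabla1_def[of g P A "nabla1 g P B C"] dfun_pif[OF A C x]
        nablaG_metric_compatible[OF x dB dC] nablaG_P[OF x] algebra_simps)
qed

lemma R1_eq:
  assumes A: "smooth_vf U A" and B: "smooth_vf U B" and C: "smooth_vf U C" and x: "x \<in> U"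
  shows "R1 g P A B C x = curv (nablaG g) A B C x + gf g A C x *\<^sub>R B x - gf g B C x *\<^sub>R A x"
proof -
  have lie: "lie A B x = nablaG g A B x - nablaG g B A x"
    using nablaG_torsion_free[OF x] by simp
  show ?thesis
    unfolding R1_def curv_def nabla1_nabla1[OF A B C x] nabla1_nabla1[OF B A C x]
    by (simp add: lie nabla1_def[of g P "lie A B"] nabla1_def[of g P B C] nabla1_def[of g P A C]
        gf_mform pif_mform mform_metric_sym[OF x, of "B x" "A x"] unit_P[OF x, unfolded gf_mform]
        algebra_simps)
qed

lemma nablaT1_eq_0:
  assumes A: "smooth_vf U A" and B: "smooth_vf U B" and C: "smooth_vf U C" and x: "x \<in> U"
  shows "nablaT1 g P A B C x = 0"
proof -
  have "tors1 g P B C = (\<lambda>y. pif g P C y *\<^sub>R B y - pif g P B y *\<^sub>R C y)"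
    by (simp add: fun_eq_iff tors1_def)
  then have "nablaG g A (tors1 g P B C) x
      = (dfun A (pif g P C) x *\<^sub>R B x + pif g P C x *\<^sub>R nablaG g A B x)
        - (dfun A (pif g P B) x *\<^sub>R C x + pif g P B x *\<^sub>R nablaG g A C x)"
    by (simp add: nablaG_diff nablaG_scaleR vf_differentiable_scaleR differentiable_pif
        vf_differentiable_if_smooth B C x)
  then show ?thesis
    unfolding nablaT1_def nabla1_def[of g P A "tors1 g P B C"]
    by (simp add: dfun_pif[OF A C x] dfun_pif[OF A B x] nabla1_def tors1_def gf_mform pif_mform
        mform_metric_sym[OF x, of "P x" "A x"] unit_P[OF x, unfolded gf_mform] algebra_simps)
qed

lemma R5_eq:
  assumes A: "smooth_vf U A" and B: "smooth_vf U B" and C: "smooth_vf U C" and x: "x \<in> U"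
  shows "R5 g P A B C x = curv (nablaG g) A B C x + gf g A C x *\<^sub>R B x - gf g B C x *\<^sub>R A x
     + (1/2 * pif g P A x * pif g P B x) *\<^sub>R C x - (1/2 * pif g P B x * pif g P C x) *\<^sub>R A x"
  unfolding R5_def Let_def R1_eq[OF A B C x] nablaT1_eq_0[OF A B C x] nablaT1_eq_0[OF B A C x]
  by (simp add: tors1_def pif_mform algebra_simps)

lemma Ric5_eq:
  assumes B: "smooth_vf U B" and C: "smooth_vf U C" and x: "x \<in> U"
  shows "Ric5 g P B C x = RicG g B C x - (real CARD('n) - 1) * gf g B C x
     - (real CARD('n) - 1) / 2 * (pif g P B x * pif g P C x)"
proof -
  have "Ric5 g P B C x = RicG g B C x
     + (\<Sum>i\<in>UNIV. gf g (coord i) C x * B x $ i)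
     - gf g B C x * (\<Sum>i\<in>UNIV. (axis i 1 :: real^'n) $ i)
     + 1/2 * pif g P B x * (\<Sum>i\<in>UNIV. pif g P (coord i) x * C x $ i)
     - 1/2 * pif g P B x * pif g P C x * (\<Sum>i\<in>UNIV. (axis i 1 :: real^'n) $ i)"
    unfolding Ric5_def RicG_def ricci_def
    by (simp add: R5_eq[OF smooth_vf_coord B C x] sum.distrib sum_subtractf sum_distrib_left
        algebra_simps) (simp add: coord_def)
  also have "(\<Sum>i\<in>UNIV. gf g (coord i) C x * B x $ i) = gf g B C x"
    by (simp only: gf_coord) (simp add: gf_mform mform_eq_sum_left mult.commute)
  also have "(\<Sum>i\<in>UNIV. pif g P (coord i) x * C x $ i) = pif g P C x"
    by (simp only: pif_coord) (simp add: pif_mform mform_eq_sum_left mult.commute)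
  finally show ?thesis
    by (simp add: axis_def algebra_simps add_divide_distrib diff_divide_distrib)
qed

lemma scal_perfect_fluid_form:
  assumes x: "x \<in> U"
    and R: "\<And>j k. R (coord j) (coord k) x
      = \<alpha> * gf g (coord j) (coord k) x + \<beta> * (pif g P (coord j) x * pif g P (coord k) x)"
  shows "scal g R x = \<alpha> * real CARD('n) - \<beta>"
proof -
  have "(\<Sum>j\<in>UNIV. \<Sum>k\<in>UNIV. ginv g x $ j $ k * gf g (coord j) (coord k) x)
      = (\<Sum>j\<in>UNIV. (ginv g x ** g x) $ j $ j)"
    by (simp only: gf_coord)
       (simp add: coord_def matrix_vector_mult_def sum_mult_axis matrix_matrix_mult_def
        metric_entry_sym[OF x])
  also have "\<dots> = real CARD('n)"
    by (simp add: metric_mult_ginv[OF x] mat_def)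
  finally have trace_g: "(\<Sum>j\<in>UNIV. \<Sum>k\<in>UNIV. ginv g x $ j $ k * gf g (coord j) (coord k) x)
      = real CARD('n)" .
  have "(\<Sum>j\<in>UNIV. \<Sum>k\<in>UNIV. ginv g x $ j $ k * (pif g P (coord j) x * pif g P (coord k) x))
      = (\<Sum>j\<in>UNIV. (g x *v P x) $ j * (ginv g x *v (g x *v P x)) $ j)"
    by (simp only: pif_coord) (simp add: matrix_vector_mult_def sum_distrib_left mult_ac)
  also have "ginv g x *v (g x *v P x) = P x"
    by (simp add: matrix_vector_mul_assoc metric_mult_ginv[OF x])
  also have "(\<Sum>j\<in>UNIV. (g x *v P x) $ j * P x $ j) = gf g P P x"
    by (simp add: gf_def inner_vec_def mult.commute)
  finally have trace_pi: "(\<Sum>j\<in>UNIV. \<Sum>k\<in>UNIV.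
      ginv g x $ j $ k * (pif g P (coord j) x * pif g P (coord k) x)) = -1"
    using unit_P[OF x] by simp
  have "scal g R x = \<alpha> * (\<Sum>j\<in>UNIV. \<Sum>k\<in>UNIV. ginv g x $ j $ k * gf g (coord j) (coord k) x)
      + \<beta> * (\<Sum>j\<in>UNIV. \<Sum>k\<in>UNIV. ginv g x $ j $ k * (pif g P (coord j) x * pif g P (coord k) x))"
    unfolding scal_def R by (simp add: sum_distrib_left sum.distrib algebra_simps)
  then show ?thesis
    using trace_g trace_pi by simp
qed

lemma einstein5_scal:
  assumes E: "einstein5 U g P" and x: "x \<in> U"
  shows "scal g (Ric5 g P) x / real CARD('n) = (real CARD('n) - 1) / 2"
proof -
  obtain i where i: "pif g P (coord i) x \<noteq> 0"
    using pif_coord_nonzero[OF x] .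
  have "Ric5 g P (coord i) P x = scal g (Ric5 g P) x / real CARD('n) * pif g P (coord i) x"
    using E smooth_vf_coord smooth_P x unfolding einstein5_def pif_eq_gf by blast
  moreover have "Ric5 g P (coord i) P x = (real CARD('n) - 1) / 2 * pif g P (coord i) x"
    using unit_P[OF x]
    by (simp add: Ric5_eq[OF smooth_vf_coord smooth_P x] RicG_P[OF smooth_vf_coord x] pif_eq_gf
        field_simps)
  ultimately have "scal g (Ric5 g P) x / real CARD('n) * pif g P (coord i) x
      = (real CARD('n) - 1) / 2 * pif g P (coord i) x"
    by simp
  then show ?thesis
    using i mult_right_cancel by blast
qed

lemma einstein5_iff_RicG:
  "einstein5 U g P \<longleftrightarrow> (\<forall>Y Z. smooth_vf U Y \<longrightarrow> smooth_vf U Z \<longrightarrow> (\<forall>x\<in>U.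
     RicG g Y Z x = (real CARD('n) - 1) / 2 * (3 * gf g Y Z x + pif g P Y x * pif g P Z x)))"
    (is "_ \<longleftrightarrow> ?Ric")
proof
  assume E: "einstein5 U g P"
  show ?Ric
  proof (intro allI impI ballI)
    fix Y Z x
    assume Y: "smooth_vf U Y" and Z: "smooth_vf U Z" and x: "x \<in> U"
    have "Ric5 g P Y Z x = (real CARD('n) - 1) / 2 * gf g Y Z x"
      using E Y Z x einstein5_scal[OF E x] unfolding einstein5_def by metis
    then show "RicG g Y Z x = (real CARD('n) - 1) / 2 * (3 * gf g Y Z x + pif g P Y x * pif g P Z x)"
      by (simp add: Ric5_eq[OF Y Z x] field_simps)
  qed
next
  assume Ric: ?Ric
  have Ric5: "Ric5 g P Y Z x = (real CARD('n) - 1) / 2 * gf g Y Z x"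
    if "smooth_vf U Y" "smooth_vf U Z" "x \<in> U" for Y Z x
  proof -
    have "RicG g Y Z x = (real CARD('n) - 1) / 2 * (3 * gf g Y Z x + pif g P Y x * pif g P Z x)"
      using Ric that by blast
    then show ?thesis
      by (simp add: Ric5_eq[OF that]) (simp add: field_simps)
  qed
  have scal5: "scal g (Ric5 g P) x / real CARD('n) = (real CARD('n) - 1) / 2" if x: "x \<in> U" for x
  proof -
    have "scal g (Ric5 g P) x = (real CARD('n) - 1) / 2 * real CARD('n) - 0"
      by (rule scal_perfect_fluid_form[OF x]) (simp add: Ric5 smooth_vf_coord x)
    then show ?thesis
      by simp
  qed
  show "einstein5 U g P"
    unfolding einstein5_def by (intro allI impI ballI) (simp only: Ric5 scal5)
qed

lemma scal_RicG:
  assumes Ric: "\<forall>Y Z. smooth_vf U Y \<longrightarrow> smooth_vf U Z \<longrightarrow> (\<forall>x\<in>U.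
     RicG g Y Z x = (real CARD('n) - 1) / 2 * (3 * gf g Y Z x + pif g P Y x * pif g P Z x))"
    and x: "x \<in> U"
  shows "2 * scal g (RicG g) x = (real CARD('n) - 1) * (3 * real CARD('n) - 1)"
proof -
  have "RicG g (coord j) (coord k) x = (real CARD('n) - 1) / 2
      * (3 * gf g (coord j) (coord k) x + pif g P (coord j) x * pif g P (coord k) x)" for j k
    using Ric smooth_vf_coord x by blast
  then have "scal g (RicG g) x = 3 * (real CARD('n) - 1) / 2 * real CARD('n) - (real CARD('n) - 1) / 2"
    by (intro scal_perfect_fluid_form[OF x]) (simp add: algebra_simps)
  then show ?thesis
    by (simp add: field_simps)
qed

end

theorem mainTheorem14:
  fixes U :: "(real^'n::finite) set" and g :: "'n metric" and P :: "'n vf"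
  assumes "CARD('n) \<ge> 3"
    and "open U"
    and "smooth_metric U g"
    and "\<forall>x\<in>U. lorentzian_matrix (g x)"
    and "smooth_vf U P"
    and "concircular U g P"
    and "\<forall>x\<in>U. gf g P P x = -1"
  shows "(einstein5 U g P \<longleftrightarrow>
           (perfect_fluid U g P \<and>
            (\<forall>Y Z. smooth_vf U Y \<longrightarrow> smooth_vf U Z \<longrightarrow> (\<forall>x\<in>U.
               RicG g Y Z x = (real CARD('n) - 1) / 2 *
                 (3 * gf g Y Z x + pif g P Y x * pif g P Z x)))))
       \<and> (einstein5 U g P \<longrightarrow>
           (\<exists>c. \<forall>x\<in>U. scal g (RicG g) x = c) \<and>
           (\<forall>x\<in>U. 2 * scal g (RicG g) x = (real CARD('n) - 1) * (3 * real CARD('n) - 1)))"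
proof -
  have "transpose (g x) = g x" and "invertible (g x)" if "x \<in> U" for x
    using assms(4) that lorentzian_matrix_invertible unfolding lorentzian_matrix_def by blast+
  then interpret unit_concircular_chart U g P
    using assms(2,3,5-7) by unfold_locales auto
  let ?n = "real CARD('n)"
  let ?Ric = "\<forall>Y Z. smooth_vf U Y \<longrightarrow> smooth_vf U Z \<longrightarrow> (\<forall>x\<in>U.
    RicG g Y Z x = (?n - 1) / 2 * (3 * gf g Y Z x + pif g P Y x * pif g P Z x))"
  have "?Ric \<Longrightarrow> perfect_fluid U g P"
    unfolding perfect_fluid_def
    by (rule exI[of _ "\<lambda>_. 3 * (?n - 1) / 2"], rule exI[of _ "\<lambda>_. (?n - 1) / 2"])
       (simp add: algebra_simps)
  moreover have "?Ric \<Longrightarrow> \<forall>x\<in>U. scal g (RicG g) x = (?n - 1) * (3 * ?n - 1) / 2"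
    using scal_RicG by (simp add: field_simps)
  ultimately show ?thesis
    using einstein5_iff_RicG scal_RicG by blast
qed

end
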